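(* Let $m\ge2$ and let $\mathcal{A}\in\mathbb{S}_{m,n}$ be strongly completely positive. Then (i) all H-eigenvalues of $\mathcal{A}$ are positive; (ii) all Z-eigenvalues of $\mathcal{A}$ are nonzero; moreover, when $m$ is even all Z-eigenvalues of $\mathcal{A}$ are positive, and when $m$ is odd a Z-eigenvector associated with a positive (respectively negative) Z-eigenvalue of $\mathcal{A}$ is nonnegative (respectively nonpositive).
   Context: $\mathbb{S}_{m,n}$: symmetric real $m$th order $n$-dimensional tensors. $(u^m)_{i_1\ldots i_m}=u_{i_1}\cdots u_{i_m}$; $(\mathcal{A}x^{m-1})_i=\sum_{i_2,\dots,i_m}a_{ii_2\ldots i_m}x_{i_2}\cdots x_{i_m}$; $x^{[m-1]}=(x_i^{m-1})_i$. $\lambda\in\mathbb{R}$ is an H-eigenvalue if $\mathcal{A}x^{m-1}=\lambda x^{[m-1]}$ for some $x\in\mathbb{R}^n\setminus\{0\}$. $\lambda\in\mathbb{R}$ is a Z-eigenvalue with Z-eigenvector $x\in\mathbb{R}^n$ if $\mathcal{A}x^{m-1}=\lambda x$ and $x^Tx=1$. $\mathcal{A}$ is strongly completely positive if $\mathcal{A}=\sum_{k=1}^r(u^{(k)})^m$ with $u^{(k)}\in\mathbb{R}^n_+$ and $\mathrm{span}\{u^{(1)},\dots,u^{(r)}\}=\mathbb{R}^n$. *)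

theory Defs
  imports "HOL-Analysis.Analysis"
begin

text \<open>An m-th order tensor of dimension n = CARD('n) is represented as a real-valued
function on index lists over the finite index type 'n; only lists of length m matter.\<close>

type_synonym 'n tensor = "'n list \<Rightarrow> real"

definition sym_tensor :: "nat \<Rightarrow> 'n tensor \<Rightarrow> bool" where
  "sym_tensor m A \<longleftrightarrow>
     (\<forall>is js. length is = m \<and> mset js = mset is \<longrightarrow> A js = A is)"

definition tensor_app :: "nat \<Rightarrow> ('n::finite) tensor \<Rightarrow> real^'n \<Rightarrow> real^'n" where
  "tensor_app m A x =
     (\<chi> i. \<Sum>is\<in>{is :: 'n list. length is = m - 1}. A (i # is) * (\<Prod>j\<leftarrow>is. x $ j))"

definition H_eigenvalue :: "nat \<Rightarrow> ('n::finite) tensor \<Rightarrow> real \<Rightarrow> bool" where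
  "H_eigenvalue m A lam \<longleftrightarrow>
     (\<exists>x::real^'n. x \<noteq> 0 \<and> (\<forall>i. tensor_app m A x $ i = lam * (x $ i) ^ (m - 1)))"

definition Z_eigenpair :: "nat \<Rightarrow> ('n::finite) tensor \<Rightarrow> real \<Rightarrow> real^'n \<Rightarrow> bool" where
  "Z_eigenpair m A lam x \<longleftrightarrow> tensor_app m A x = lam *\<^sub>R x \<and> x \<bullet> x = 1"

definition strongly_completely_positive :: "nat \<Rightarrow> ('n::finite) tensor \<Rightarrow> bool" where
  "strongly_completely_positive m A \<longleftrightarrow>
     (\<exists>(r::nat) (u :: nat \<Rightarrow> real^'n).
        (\<forall>k<r. \<forall>i. u k $ i \<ge> 0) \<and>
        span (u ` {..<r}) = UNIV \<and>
        (\<forall>is. length is = m \<longrightarrow> A is = (\<Sum>k<r. \<Prod>j\<leftarrow>is. u k $ j)))"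

end

theory Submission
  imports Defs
begin

text \<open>
  Write \<open>A = \<Sum>\<^sub>k u\<^sub>k\<^sup>m\<close> with nonnegative vectors \<open>u\<^sub>k\<close> spanning \<open>\<real>\<^sup>n\<close>. Then
  \<open>(A x\<^sup>m\<^sup>-\<^sup>1)\<^sub>i = \<Sum>\<^sub>k u\<^sub>k\<^sub>i (u\<^sub>k \<bullet> x)\<^sup>m\<^sup>-\<^sup>1\<close>, hence \<open>x \<bullet> A x\<^sup>m\<^sup>-\<^sup>1 = \<Sum>\<^sub>k (u\<^sub>k \<bullet> x)\<^sup>m\<close>,
  and spanning makes some \<open>u\<^sub>k \<bullet> x\<close> nonzero whenever \<open>x \<noteq> 0\<close>. For even \<open>m\<close> this form is
  positive definite, which forces every H- and Z-eigenvalue to be positive. For odd \<open>m\<close> the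
  exponent \<open>m - 1\<close> is even, so \<open>A x\<^sup>m\<^sup>-\<^sup>1\<close> is a nonzero nonnegative vector; comparing it
  componentwise with \<open>\<lambda> x\<^sup>[\<^sup>m\<^sup>-\<^sup>1\<^sup>]\<close> resp. \<open>\<lambda> x\<close> yields the signs of \<open>\<lambda>\<close> and of the Z-eigenvector.
\<close>

lemma prod_list_mult_distrib:
  "(\<Prod>j\<leftarrow>xs. f j * g j) = (\<Prod>j\<leftarrow>xs. f j) * (\<Prod>j\<leftarrow>xs. g j :: 'a :: comm_monoid_mult)"
  by (induction xs) (simp_all add: mult_ac)

lemma sum_lists_length_prod_list:
  fixes f :: "'n::finite \<Rightarrow> 'a::comm_semiring_1"
  shows "(\<Sum>is\<in>{is. length is = n}. \<Prod>j\<leftarrow>is. f j) = (\<Sum>j\<in>UNIV. f j) ^ n"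
proof (induction n)
  case 0
  have "{is::'n list. length is = 0} = {[]}" by auto
  then show ?case by simp
next
  case (Suc n)
  have lists_Suc: "{is. length is = Suc n} = (\<lambda>(a, is). a # is) ` (UNIV \<times> {is. length is = n})"
    by (auto simp: length_Suc_conv)
  have "inj_on (\<lambda>(a, is). a # is) (UNIV \<times> {is::'n list. length is = n})"
    by (auto simp: inj_on_def)
  then have "(\<Sum>is\<in>{is. length is = Suc n}. \<Prod>j\<leftarrow>is. f j)
      = (\<Sum>a\<in>UNIV. \<Sum>is\<in>{is::'n list. length is = n}. f a * (\<Prod>j\<leftarrow>is. f j))"
    unfolding lists_Suc by (simp add: sum.reindex sum.cartesian_product case_prod_unfold)
  also have "\<dots> = (\<Sum>a\<in>UNIV. f a) * (\<Sum>is\<in>{is::'n list. length is = n}. \<Prod>j\<leftarrow>is. f j)"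
    by (simp add: sum_product)
  finally show ?case using Suc by simp
qed

lemma Z_eigenpair_eigenvalue:
  "Z_eigenpair m A lam x \<Longrightarrow> x \<bullet> tensor_app m A x = lam"
  by (simp add: Z_eigenpair_def)

locale power_sum_tensor =
  fixes m :: nat and A :: "('n::finite) tensor" and r :: nat and u :: "nat \<Rightarrow> real^'n"
  assumes order_pos: "m \<ge> 1"
    and tensor_eq: "length is = m \<Longrightarrow> A is = (\<Sum>k<r. \<Prod>j\<leftarrow>is. u k $ j)"
begin

lemma mult_power_order_pred: "a * a ^ (m - 1) = a ^ m"
  using order_pos by (cases m) auto

lemma power_order_pred_nonneg: "odd m \<Longrightarrow> 0 \<le> (a::real) ^ (m - 1)"
  using order_pos by (simp add: zero_le_even_power)

lemma tensor_app_eq: "tensor_app m A x $ i = (\<Sum>k<r. u k $ i * (u k \<bullet> x) ^ (m - 1))"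
proof -
  have "tensor_app m A x $ i
      = (\<Sum>is\<in>{is. length is = m - 1}. \<Sum>k<r. u k $ i * (\<Prod>j\<leftarrow>is. u k $ j * x $ j))"
    unfolding tensor_app_def using order_pos
    by (auto intro!: sum.cong simp: tensor_eq prod_list_mult_distrib sum_distrib_right mult.assoc)
  also have "\<dots> = (\<Sum>k<r. u k $ i * (\<Sum>is\<in>{is. length is = m - 1}. \<Prod>j\<leftarrow>is. u k $ j * x $ j))"
    by (subst sum.swap) (simp add: sum_distrib_left)
  also have "\<dots> = (\<Sum>k<r. u k $ i * (u k \<bullet> x) ^ (m - 1))"
    by (simp add: sum_lists_length_prod_list inner_vec_def)
  finally show ?thesis .
qed

lemma inner_tensor_app: "x \<bullet> tensor_app m A x = (\<Sum>k<r. (u k \<bullet> x) ^ m)"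
proof -
  have "x \<bullet> tensor_app m A x = (\<Sum>i\<in>UNIV. \<Sum>k<r. x $ i * (u k $ i * (u k \<bullet> x) ^ (m - 1)))"
    by (simp add: inner_vec_def tensor_app_eq sum_distrib_left mult.commute)
  also have "\<dots> = (\<Sum>k<r. (u k \<bullet> x) ^ (m - 1) * (\<Sum>i\<in>UNIV. u k $ i * x $ i))"
    by (subst sum.swap) (simp add: sum_distrib_left mult_ac)
  also have "\<dots> = (\<Sum>k<r. (u k \<bullet> x) * (u k \<bullet> x) ^ (m - 1))"
    by (simp add: inner_vec_def mult.commute)
  also have "\<dots> = (\<Sum>k<r. (u k \<bullet> x) ^ m)"
    by (simp only: mult_power_order_pred)
  finally show ?thesis .
qed

end

locale strongly_cp_decomposition = power_sum_tensor +
  assumes nonneg: "k < r \<Longrightarrow> 0 \<le> u k $ i"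
    and spanning: "span (u ` {..<r}) = UNIV"
begin

lemma exists_inner_nonzero:
  assumes "x \<noteq> 0"
  obtains k where "k < r" "u k \<bullet> x \<noteq> 0"
proof -
  have "\<not> orthogonal x x"
    using assms by (simp add: orthogonal_def)
  then have "\<not> (\<forall>y\<in>u ` {..<r}. orthogonal x y)"
    using orthogonal_to_span[of x "u ` {..<r}" x] spanning by auto
  then show ?thesis
    using that by (auto simp: orthogonal_def inner_commute)
qed

lemma inner_tensor_app_pos:
  assumes "even m" "x \<noteq> 0"
  shows "0 < x \<bullet> tensor_app m A x"
proof -
  obtain k where "k < r" "u k \<bullet> x \<noteq> 0"
    using exists_inner_nonzero assms(2) .
  then show ?thesis
    unfolding inner_tensor_app using assms(1)
    by (intro sum_pos2[of _ k]) (auto simp: zero_le_even_power zero_less_power_eq)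
qed

lemma tensor_app_nonneg:
  assumes "odd m"
  shows "0 \<le> tensor_app m A x $ i"
  unfolding tensor_app_eq
  by (intro sum_nonneg mult_nonneg_nonneg nonneg power_order_pred_nonneg assms) simp

lemma exists_tensor_app_pos:
  assumes "odd m" "x \<noteq> 0"
  obtains i where "0 < tensor_app m A x $ i"
proof -
  obtain k where k: "k < r" "u k \<bullet> x \<noteq> 0"
    using exists_inner_nonzero assms(2) .
  then have "u k \<noteq> 0"
    by auto
  then obtain i where "u k $ i \<noteq> 0"
    by (auto simp: vec_eq_iff)
  with k nonneg have "0 < u k $ i * (u k \<bullet> x) ^ (m - 1)"
    using power_order_pred_nonneg[OF assms(1), of "u k \<bullet> x"]
    by (auto simp: less_le zero_less_power_eq)
  also have "\<dots> \<le> tensor_app m A x $ i"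
    unfolding tensor_app_eq using k
    by (intro member_le_sum mult_nonneg_nonneg nonneg power_order_pred_nonneg assms(1)) simp_all
  finally show ?thesis using that by blast
qed

lemma H_eigenvalue_pos:
  assumes "H_eigenvalue m A lam"
  shows "0 < lam"
proof -
  obtain x where x: "x \<noteq> 0"
    and eig: "\<And>i. tensor_app m A x $ i = lam * (x $ i) ^ (m - 1)"
    using assms unfolding H_eigenvalue_def by blast
  show ?thesis
  proof (cases "even m")
    case True
    obtain i where "x $ i \<noteq> 0"
      using x by (auto simp: vec_eq_iff)
    then have "0 < (\<Sum>i\<in>UNIV. (x $ i) ^ m)"
      using True by (intro sum_pos2[of _ i]) (auto simp: zero_le_even_power zero_less_power_eq)
    moreover have "x \<bullet> tensor_app m A x = (\<Sum>i\<in>UNIV. lam * (x $ i * (x $ i) ^ (m - 1)))"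
      by (simp add: inner_vec_def eig mult_ac)
    then have "x \<bullet> tensor_app m A x = lam * (\<Sum>i\<in>UNIV. (x $ i) ^ m)"
      by (simp only: mult_power_order_pred sum_distrib_left)
    ultimately show ?thesis
      using inner_tensor_app_pos[OF True x] by (simp add: zero_less_mult_iff)
  next
    case False
    obtain i where "0 < tensor_app m A x $ i"
      using exists_tensor_app_pos False x .
    moreover have "0 \<le> (x $ i) ^ (m - 1)"
      using False by (rule power_order_pred_nonneg)
    ultimately show ?thesis
      by (metis eig mult_nonpos_nonneg not_le)
  qed
qed

lemma Z_eigenvalue_pos_even:
  assumes "even m" "Z_eigenpair m A lam x"
  shows "0 < lam"
proof -
  have "x \<noteq> 0"
    using assms(2) by (auto simp: Z_eigenpair_def)
  then show ?thesis
    using inner_tensor_app_pos[OF assms(1)] Z_eigenpair_eigenvalue[OF assms(2)] by metis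
qed

lemma Z_eigenpair_odd:
  assumes "odd m" "Z_eigenpair m A lam x"
  shows "lam \<noteq> 0" and "0 \<le> lam * x $ i"
proof -
  have eig: "tensor_app m A x = lam *\<^sub>R x" and "x \<noteq> 0"
    using assms(2) by (auto simp: Z_eigenpair_def)
  then obtain j where "0 < tensor_app m A x $ j"
    using exists_tensor_app_pos assms(1) by blast
  then show "lam \<noteq> 0"
    by (cases "lam = 0") (simp_all add: eig)
  show "0 \<le> lam * x $ i"
    using tensor_app_nonneg[OF assms(1), of x i] by (simp add: eig)
qed

end

theorem mainTheorem7:
  fixes A :: "('n::finite) tensor" and m :: nat
  assumes "m \<ge> 2"
    and "sym_tensor m A"
    and "strongly_completely_positive m A"
  shows "(\<forall>lam. H_eigenvalue m A lam \<longrightarrow> lam > 0)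
       \<and> (\<forall>lam x. Z_eigenpair m A lam x \<longrightarrow> lam \<noteq> 0)
       \<and> (even m \<longrightarrow> (\<forall>lam x. Z_eigenpair m A lam x \<longrightarrow> lam > 0))
       \<and> (odd m \<longrightarrow> (\<forall>lam x. Z_eigenpair m A lam x \<longrightarrow>
              (lam > 0 \<longrightarrow> (\<forall>i. x $ i \<ge> 0)) \<and> (lam < 0 \<longrightarrow> (\<forall>i. x $ i \<le> 0))))"
  \<comment> \<open>Symmetry is implied by the decomposition, and \<open>m \<ge> 1\<close> would suffice.\<close>
proof -
  obtain r and u :: "nat \<Rightarrow> real^'n" where "strongly_cp_decomposition m A r u"
    using assms(1,3) unfolding strongly_completely_positive_def
    by (auto simp: strongly_cp_decomposition_def strongly_cp_decomposition_axioms_def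
        power_sum_tensor_def)
  then interpret strongly_cp_decomposition m A r u .
  have "lam \<noteq> 0" if "Z_eigenpair m A lam x" for lam x
    using that Z_eigenvalue_pos_even Z_eigenpair_odd(1) by (cases "even m") fastforce+
  moreover have "(0 < lam \<longrightarrow> 0 \<le> x $ i) \<and> (lam < 0 \<longrightarrow> x $ i \<le> 0)"
    if "odd m" "Z_eigenpair m A lam x" for lam x i
    using Z_eigenpair_odd(2)[OF that, of i] by (auto simp: zero_le_mult_iff)
  ultimately show ?thesis
    using H_eigenvalue_pos Z_eigenvalue_pos_even by blast
qed

end
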